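(* Let $M=(m_{ij})$ be an $n\times n$ matrix of integers with $n\geq 3$ and $m_{ij}\geq 1$ for all $i,j$. Then $\mathrm{Cat}(M)\neq\emptyset$ if and only if for every $3\times 3$ submatrix $N$ of $M$ one has $\mathrm{Cat}(N)\neq\emptyset$.
   Context: For an $n\times n$ matrix $M=(m_{ij})$ with entries in the natural numbers, $\mathrm{Cat}(M)$ denotes the collection of categories $A$ with exactly $n$ distinct objects $x_1,\dots,x_n$ such that $|A(x_i,x_j)|=m_{ij}$ for all $i,j$, where $A(x_i,x_j)$ is the set of morphisms from $x_i$ to $x_j$. A $3\times 3$ submatrix of $M$ means $(m_{st})_{s,t\in S}$ for a $3$-element subset $S\subseteq\{1,\dots,n\}$ (same indices for rows and columns, in increasing order). *)

theory Defs
  imports Main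
begin

text \<open>A (small) category whose objects are the indices 0,...,n-1.
  hom i j is the set of morphisms from object i to object j (morphisms are
  encoded as natural numbers; hom-sets for different pairs are separate),
  idm i is the identity of i, and cmp i j k g f is the composite g o f
  of f : i -> j and g : j -> k.\<close>

definition is_category ::
  "nat \<Rightarrow> (nat \<Rightarrow> nat \<Rightarrow> nat set) \<Rightarrow> (nat \<Rightarrow> nat)
   \<Rightarrow> (nat \<Rightarrow> nat \<Rightarrow> nat \<Rightarrow> nat \<Rightarrow> nat \<Rightarrow> nat) \<Rightarrow> bool" where
  "is_category n hom idm cmp \<longleftrightarrow>
     (\<forall>i<n. idm i \<in> hom i i) \<and>
     (\<forall>i<n. \<forall>j<n. \<forall>k<n. \<forall>f\<in>hom i j. \<forall>g\<in>hom j k. cmp i j k g f \<in> hom i k) \<and>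
     (\<forall>i<n. \<forall>j<n. \<forall>k<n. \<forall>l<n. \<forall>f\<in>hom i j. \<forall>g\<in>hom j k. \<forall>h\<in>hom k l.
        cmp i k l h (cmp i j k g f) = cmp i j l (cmp j k l h g) f) \<and>
     (\<forall>i<n. \<forall>j<n. \<forall>f\<in>hom i j. cmp i j j (idm j) f = f \<and> cmp i i j f (idm i) = f)"

definition Cat_nonempty :: "nat \<Rightarrow> (nat \<Rightarrow> nat \<Rightarrow> nat) \<Rightarrow> bool" where
  "Cat_nonempty n M \<longleftrightarrow>
     (\<exists>hom idm cmp. is_category n hom idm cmp \<and>
        (\<forall>i<n. \<forall>j<n. finite (hom i j) \<and> card (hom i j) = M i j))"

end

theory Submission
  imports Defs "HOL-Library.Countable"
begin

text \<open>Let t be an object whose only endomorphism is its identity. A composite g \<circ> f of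
  f : j \<rightarrow> t and g : t \<rightarrow> k determines its factors: for fixed u : t \<rightarrow> j and v : k \<rightarrow> t,
  (g \<circ> f) \<circ> u = g and v \<circ> (g \<circ> f) = f, because every composite t \<rightarrow> j \<rightarrow> t is id_t.
  Hence m_tk m_jt \<le> m_jk, and if m_jj > 1 no composite j \<rightarrow> t \<rightarrow> j is id_j, so
  m_tj m_jt < m_jj. These constraints involve three objects at a time and therefore follow
  from the 3 \<times> 3 submatrices. Conversely they suffice: let A(j,k) consist of id_j (when
  j = k and m_jj > 1), the m_tk m_jt formal composites through t, and further morphisms
  composing like one fixed formal composite. If no diagonal entry is 1, the same works with
  a single formal composite through a virtual such object t.\<close>

locale category_on =
  fixes n :: nat
    and hom :: "nat \<Rightarrow> nat \<Rightarrow> 'a set"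
    and idm :: "nat \<Rightarrow> 'a"
    and cmp :: "nat \<Rightarrow> nat \<Rightarrow> nat \<Rightarrow> 'a \<Rightarrow> 'a \<Rightarrow> 'a"
  assumes id_hom: "i < n \<Longrightarrow> idm i \<in> hom i i"
    and comp_hom: "\<lbrakk>i < n; j < n; k < n; f \<in> hom i j; g \<in> hom j k\<rbrakk> \<Longrightarrow> cmp i j k g f \<in> hom i k"
    and comp_assoc: "\<lbrakk>i < n; j < n; k < n; l < n; f \<in> hom i j; g \<in> hom j k; h \<in> hom k l\<rbrakk>
      \<Longrightarrow> cmp i k l h (cmp i j k g f) = cmp i j l (cmp j k l h g) f"
    and comp_id_left: "\<lbrakk>i < n; j < n; f \<in> hom i j\<rbrakk> \<Longrightarrow> cmp i j j (idm j) f = f"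
    and comp_id_right: "\<lbrakk>i < n; j < n; f \<in> hom i j\<rbrakk> \<Longrightarrow> cmp i i j f (idm i) = f"

lemma is_category_iff_category_on: "is_category n hom idm cmp \<longleftrightarrow> category_on n hom idm cmp"
  unfolding is_category_def category_on_def by (simp add: Ball_def imp_conjR all_conj_distrib conj_ac)

context category_on
begin

lemma reindex:
  assumes "\<And>s. s < m \<Longrightarrow> \<sigma> s < n"
  shows "category_on m (\<lambda>s u. hom (\<sigma> s) (\<sigma> u)) (\<lambda>s. idm (\<sigma> s)) (\<lambda>s u v. cmp (\<sigma> s) (\<sigma> u) (\<sigma> v))"
  by unfold_locales (simp_all add: assms id_hom comp_hom comp_assoc comp_id_left comp_id_right)

lemma comp_through_trivial_eq_id:
  assumes "t < n" "j < n" "hom t t = {idm t}" "f \<in> hom t j" "g \<in> hom j t"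
  shows "cmp t j t g f = idm t"
  using comp_hom assms by blast

lemma inj_on_comp_through_trivial:
  assumes t: "t < n" and j: "j < n" and k: "k < n" and trivial: "hom t t = {idm t}"
    and s0: "s0 \<in> hom t j" and r0: "r0 \<in> hom k t"
  shows "inj_on (\<lambda>(g, f). cmp j t k g f) (hom t k \<times> hom j t)"
proof (rule inj_on_inverseI)
  fix x assume "x \<in> hom t k \<times> hom j t"
  then obtain g f where x: "x = (g, f)" and g: "g \<in> hom t k" and f: "f \<in> hom j t" by blast
  have "cmp t j k (cmp j t k g f) s0 = cmp t t k g (cmp t j t f s0)"
    using comp_assoc[of t j t k s0 f g] t j k s0 f g by simp
  also have "\<dots> = g"
    using comp_through_trivial_eq_id[OF t j trivial s0 f] comp_id_right t k g by simp
  finally have left: "cmp t j k (cmp j t k g f) s0 = g" .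
  have "cmp j k t r0 (cmp j t k g f) = cmp j t t (cmp t k t r0 g) f"
    using comp_assoc[of j t k t f g r0] t j k r0 f g by simp
  also have "\<dots> = f"
    using comp_through_trivial_eq_id[OF t k trivial g r0] comp_id_left t j f by simp
  finally have right: "cmp j k t r0 (cmp j t k g f) = f" .
  show "(\<lambda>y. (cmp t j k y s0, cmp j k t r0 y)) ((\<lambda>(g, f). cmp j t k g f) x) = x"
    using left right x by simp
qed

lemma card_hom_through_trivial_le:
  assumes t: "t < n" and j: "j < n" and k: "k < n" and trivial: "hom t t = {idm t}"
    and "finite (hom j k)" "hom t j \<noteq> {}" "hom k t \<noteq> {}"
  shows "card (hom t k) * card (hom j t) \<le> card (hom j k)"
proof -
  obtain s0 r0 where "s0 \<in> hom t j" "r0 \<in> hom k t" using assms by blast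
  then have "card (hom t k) * card (hom j t) = card ((\<lambda>(g, f). cmp j t k g f) ` (hom t k \<times> hom j t))"
    using inj_on_comp_through_trivial[OF t j k trivial] by (simp add: card_image card_cartesian_product)
  also have "\<dots> \<le> card (hom j k)"
    using assms comp_hom by (intro card_mono) auto
  finally show ?thesis .
qed

text \<open>If g \<circ> f were id_j, then x \<circ> g = (g \<circ> f) \<circ> x \<circ> g = g for every endomorphism x
  of j, since f \<circ> x \<circ> g = id_t; hence x = x \<circ> g \<circ> f = id_j.\<close>

lemma comp_through_trivial_neq_id:
  assumes t: "t < n" and j: "j < n" and trivial: "hom t t = {idm t}"
    and nontrivial: "hom j j \<noteq> {idm j}" and g: "g \<in> hom t j" and f: "f \<in> hom j t"
  shows "cmp j t j g f \<noteq> idm j"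
proof
  assume gf: "cmp j t j g f = idm j"
  have "x = idm j" if x: "x \<in> hom j j" for x
  proof -
    have xg: "cmp t j j x g \<in> hom t j" using comp_hom t j x g by blast
    have "cmp t j j x g = cmp t j j (cmp j t j g f) (cmp t j j x g)"
      using gf comp_id_left t j xg by simp
    also have "\<dots> = cmp t t j g (cmp t j t f (cmp t j j x g))"
      using comp_assoc[of t j t j "cmp t j j x g" f g] t j xg f g by simp
    also have "\<dots> = g"
      using comp_through_trivial_eq_id[OF t j trivial xg f] comp_id_right t j g by simp
    finally have xg_eq: "cmp t j j x g = g" .
    have "x = cmp j j j x (cmp j t j g f)" using gf comp_id_right j x by simp
    also have "\<dots> = cmp j t j (cmp t j j x g) f" using comp_assoc[of j t j j f g x] t j x g f by simp
    finally show ?thesis using xg_eq gf by simp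
  qed
  then have "hom j j = {idm j}" using id_hom j by blast
  with nontrivial show False by contradiction
qed

lemma card_hom_through_trivial_less:
  assumes t: "t < n" and j: "j < n" and trivial: "hom t t = {idm t}"
    and nontrivial: "hom j j \<noteq> {idm j}" and fin: "finite (hom j j)"
    and "hom t j \<noteq> {}" "hom j t \<noteq> {}"
  shows "card (hom t j) * card (hom j t) < card (hom j j)"
proof -
  obtain s0 r0 where "s0 \<in> hom t j" "r0 \<in> hom j t" using assms by blast
  then have "card (hom t j) * card (hom j t) = card ((\<lambda>(g, f). cmp j t j g f) ` (hom t j \<times> hom j t))"
    using inj_on_comp_through_trivial[OF t j j trivial] by (simp add: card_image card_cartesian_product)
  also have "\<dots> \<le> card (hom j j - {idm j})"
  proof (rule card_mono)
    show "finite (hom j j - {idm j})" using fin by simp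
    show "(\<lambda>(g, f). cmp j t j g f) ` (hom t j \<times> hom j t) \<subseteq> hom j j - {idm j}"
    proof
      fix y assume "y \<in> (\<lambda>(g, f). cmp j t j g f) ` (hom t j \<times> hom j t)"
      then obtain g f where y: "y = cmp j t j g f" and g: "g \<in> hom t j" and f: "f \<in> hom j t"
        by auto
      show "y \<in> hom j j - {idm j}"
        using y comp_hom[OF j t j f g] comp_through_trivial_neq_id[OF t j trivial nontrivial g f] by simp
    qed
  qed
  also have "\<dots> < card (hom j j)" using fin id_hom[OF j] by (rule card_Diff1_less)
  finally show ?thesis .
qed

end

lemma Cat_nonempty_of_category_on:
  fixes hom :: "nat \<Rightarrow> nat \<Rightarrow> 'a::countable set"
  assumes "category_on n hom idm cmp"
    and "\<And>i j. i < n \<Longrightarrow> j < n \<Longrightarrow> finite (hom i j) \<and> card (hom i j) = M i j"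
  shows "Cat_nonempty n M"
  unfolding Cat_nonempty_def is_category_iff_category_on
proof (intro exI conjI)
  show "category_on n (\<lambda>i j. to_nat ` hom i j) (\<lambda>i. to_nat (idm i))
      (\<lambda>i j k g f. to_nat (cmp i j k (from_nat g) (from_nat f)))"
    using assms(1) unfolding category_on_def by (auto simp: image_iff)
  show "\<forall>i<n. \<forall>j<n. finite (to_nat ` hom i j) \<and> card (to_nat ` hom i j) = M i j"
    using assms(2) by (simp add: card_image inj_on_def)
qed

lemma Cat_nonempty_reindex:
  assumes "Cat_nonempty n M" and "\<And>s. s < m \<Longrightarrow> \<sigma> s < n"
    and "\<And>s u. s < m \<Longrightarrow> u < m \<Longrightarrow> N s u = M (\<sigma> s) (\<sigma> u)"
  shows "Cat_nonempty m N"
proof -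
  obtain hom :: "nat \<Rightarrow> nat \<Rightarrow> nat set" and idm cmp where "category_on n hom idm cmp"
    and card: "\<forall>i<n. \<forall>j<n. finite (hom i j) \<and> card (hom i j) = M i j"
    using assms(1) unfolding Cat_nonempty_def is_category_iff_category_on by blast
  then have "category_on m (\<lambda>s u. hom (\<sigma> s) (\<sigma> u)) (\<lambda>s. idm (\<sigma> s)) (\<lambda>s u v. cmp (\<sigma> s) (\<sigma> u) (\<sigma> v))"
    using category_on.reindex assms(2) by blast
  then show ?thesis
    unfolding Cat_nonempty_def is_category_iff_category_on using card assms(2,3) by auto
qed

lemma Cat_nonempty_through_trivial:
  assumes "Cat_nonempty m N" and pos: "\<And>i j. i < m \<Longrightarrow> j < m \<Longrightarrow> N i j \<ge> 1"
    and t: "t < m" "N t t = 1" and j: "j < m" and k: "k < m"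
  shows "N t k * N j t \<le> N j k" and "N j j \<noteq> 1 \<Longrightarrow> N t j * N j t < N j j"
proof -
  obtain hom :: "nat \<Rightarrow> nat \<Rightarrow> nat set" and idm cmp where C: "category_on m hom idm cmp"
    and card: "\<And>i j. i < m \<Longrightarrow> j < m \<Longrightarrow> finite (hom i j) \<and> card (hom i j) = N i j"
    using assms(1) unfolding Cat_nonempty_def is_category_iff_category_on by blast
  have nonempty: "hom i j \<noteq> {}" if "i < m" "j < m" for i j
    using card[OF that] pos[OF that] by auto
  have trivial_iff: "hom i i = {idm i} \<longleftrightarrow> N i i = 1" if "i < m" for i
    using card[OF that that] category_on.id_hom[OF C that] by (auto simp: card_1_singleton_iff)
  have trivial: "hom t t = {idm t}" using trivial_iff t by blast
  show "N t k * N j t \<le> N j k"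
    using category_on.card_hom_through_trivial_le[OF C t(1) j k trivial] card nonempty t j k by simp
  show "N t j * N j t < N j j" if "N j j \<noteq> 1"
    using category_on.card_hom_through_trivial_less[OF C t(1) j trivial] trivial_iff that
      card nonempty t j by simp
qed

text \<open>Factor s r is the formal composite of the r-th morphism j \<rightarrow> t and the s-th morphism
  t \<rightarrow> k; Extra morphisms compose like Factor 0 0. The predicate T marks the objects with a
  single endomorphism; their identity is Factor 0 0 rather than Ident.\<close>

datatype mor = Ident | Factor nat nat | Extra nat

instance mor :: countable by countable_datatype

fun left_factor :: "mor \<Rightarrow> nat" where
  "left_factor (Factor s r) = s"
| "left_factor _ = 0"

fun right_factor :: "mor \<Rightarrow> nat" where
  "right_factor (Factor s r) = r"
| "right_factor _ = 0"

definition factor_comp :: "mor \<Rightarrow> mor \<Rightarrow> mor" where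
  "factor_comp g f =
    (if f = Ident then g else if g = Ident then f else Factor (left_factor g) (right_factor f))"

definition factor_hom ::
  "(nat \<Rightarrow> bool) \<Rightarrow> (nat \<Rightarrow> nat) \<Rightarrow> (nat \<Rightarrow> nat) \<Rightarrow> (nat \<Rightarrow> nat \<Rightarrow> nat) \<Rightarrow> nat \<Rightarrow> nat \<Rightarrow> mor set"
  where
  "factor_hom T a b c j k =
    (if j = k \<and> \<not> T j then {Ident} else {}) \<union> (\<lambda>(s, r). Factor s r) ` ({..<a k} \<times> {..<b j})
      \<union> Extra ` {..<c j k}"

definition factor_id :: "(nat \<Rightarrow> bool) \<Rightarrow> nat \<Rightarrow> mor" where
  "factor_id T j = (if T j then Factor 0 0 else Ident)"

lemma factor_comp_assoc: "factor_comp h (factor_comp g f) = factor_comp (factor_comp h g) f"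
  by (simp add: factor_comp_def)

lemma Ident_in_factor_hom: "Ident \<in> factor_hom T a b c j k \<longleftrightarrow> j = k \<and> \<not> T j"
  by (auto simp: factor_hom_def)

lemma Factor_in_factor_hom: "Factor s r \<in> factor_hom T a b c j k \<longleftrightarrow> s < a k \<and> r < b j"
  by (auto simp: factor_hom_def)

lemma left_factor_less:
  "g \<in> factor_hom T a b c j k \<Longrightarrow> g \<noteq> Ident \<Longrightarrow> a k \<ge> 1 \<Longrightarrow> left_factor g < a k"
  by (auto simp: factor_hom_def split: if_splits)

lemma right_factor_less:
  "f \<in> factor_hom T a b c j k \<Longrightarrow> f \<noteq> Ident \<Longrightarrow> b j \<ge> 1 \<Longrightarrow> right_factor f < b j"
  by (auto simp: factor_hom_def split: if_splits)

lemma factor_hom_into_trivial: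
  "f \<in> factor_hom T a b c j k \<Longrightarrow> T k \<Longrightarrow> a k = 1 \<Longrightarrow> c j k = 0 \<Longrightarrow> \<exists>r. f = Factor 0 r"
  by (auto simp: factor_hom_def split: if_splits)

lemma factor_hom_out_of_trivial:
  "f \<in> factor_hom T a b c j k \<Longrightarrow> T j \<Longrightarrow> b j = 1 \<Longrightarrow> c j k = 0 \<Longrightarrow> \<exists>s. f = Factor s 0"
  by (auto simp: factor_hom_def split: if_splits)

lemma finite_factor_hom: "finite (factor_hom T a b c j k)"
  by (simp add: factor_hom_def)

lemma card_factor_hom:
  "card (factor_hom T a b c j k) = (if j = k \<and> \<not> T j then 1 else 0) + a k * b j + c j k"
proof -
  let ?I = "if j = k \<and> \<not> T j then {Ident} else {}"
  let ?F = "(\<lambda>(s, r). Factor s r) ` ({..<a k} \<times> {..<b j})"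
  let ?X = "Extra ` {..<c j k}"
  have "card (?I \<union> ?F \<union> ?X) = card (?I \<union> ?F) + card ?X"
    by (rule card_Un_disjoint) auto
  also have "card (?I \<union> ?F) = card ?I + card ?F"
    by (rule card_Un_disjoint) auto
  also have "card ?F = a k * b j"
    by (simp add: card_image inj_on_def card_cartesian_product)
  also have "card ?X = c j k"
    by (simp add: card_image inj_on_def)
  finally show ?thesis
    unfolding factor_hom_def by (simp split: if_splits)
qed

lemma factor_comp_in_factor_hom:
  assumes f: "f \<in> factor_hom T a b c i j" and g: "g \<in> factor_hom T a b c j k"
    and pos: "a k \<ge> 1" "b i \<ge> 1"
  shows "factor_comp g f \<in> factor_hom T a b c i k"
proof (cases "f = Ident \<or> g = Ident")
  case True
  then show ?thesis using f g by (auto simp: factor_comp_def Ident_in_factor_hom)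
next
  case False
  then show ?thesis
    using left_factor_less[OF g _ pos(1)] right_factor_less[OF f _ pos(2)]
    by (simp add: factor_comp_def Factor_in_factor_hom)
qed

lemma factor_comp_id_left:
  assumes "f \<in> factor_hom T a b c i j" and "T j \<Longrightarrow> a j = 1 \<and> c i j = 0"
  shows "factor_comp (factor_id T j) f = f"
proof (cases "T j")
  case True
  then obtain r where "f = Factor 0 r" using factor_hom_into_trivial assms by blast
  then show ?thesis using True by (simp add: factor_comp_def factor_id_def)
qed (simp add: factor_comp_def factor_id_def)

lemma factor_comp_id_right:
  assumes "f \<in> factor_hom T a b c i j" and "T i \<Longrightarrow> b i = 1 \<and> c i j = 0"
  shows "factor_comp f (factor_id T i) = f"
proof (cases "T i")
  case True
  then obtain s where "f = Factor s 0" using factor_hom_out_of_trivial assms by blast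
  then show ?thesis using True by (simp add: factor_comp_def factor_id_def)
qed (simp add: factor_comp_def factor_id_def)

lemma factor_category_on:
  assumes pos: "\<And>k. k < n \<Longrightarrow> a k \<ge> 1 \<and> b k \<ge> 1"
    and trivial: "\<And>j. j < n \<Longrightarrow> T j \<Longrightarrow> a j = 1 \<and> b j = 1"
    and no_extra: "\<And>j k. j < n \<Longrightarrow> k < n \<Longrightarrow> T j \<or> T k \<Longrightarrow> c j k = 0"
  shows "category_on n (factor_hom T a b c) (factor_id T) (\<lambda>_ _ _. factor_comp)"
proof (unfold_locales)
  show "factor_id T i \<in> factor_hom T a b c i i" if "i < n" for i
    using trivial that by (simp add: factor_id_def Ident_in_factor_hom Factor_in_factor_hom)
  show "factor_comp g f \<in> factor_hom T a b c i k"
    if "i < n" "k < n" "f \<in> factor_hom T a b c i j" "g \<in> factor_hom T a b c j k" for i j k f g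
    using factor_comp_in_factor_hom pos that by blast
  show "factor_comp h (factor_comp g f) = factor_comp (factor_comp h g) f" for f g h
    by (rule factor_comp_assoc)
  show "factor_comp (factor_id T j) f = f"
    if "i < n" "j < n" "f \<in> factor_hom T a b c i j" for i j f
    using factor_comp_id_left trivial no_extra that by blast
  show "factor_comp f (factor_id T i) = f"
    if "i < n" "j < n" "f \<in> factor_hom T a b c i j" for i j f
    using factor_comp_id_right trivial no_extra that by blast
qed

lemma Cat_nonempty_by_factorization:
  assumes pos: "\<And>k. k < n \<Longrightarrow> a k \<ge> 1 \<and> b k \<ge> 1"
    and trivial: "\<And>j. j < n \<Longrightarrow> M j j = 1 \<Longrightarrow> a j = 1 \<and> b j = 1"
    and through: "\<And>j k. j < n \<Longrightarrow> k < n \<Longrightarrow> M j j = 1 \<or> M k k = 1 \<Longrightarrow> M j k = a k * b j"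
    and room: "\<And>j k. j < n \<Longrightarrow> k < n \<Longrightarrow> a k * b j + (if j = k \<and> M j j \<noteq> 1 then 1 else 0) \<le> M j k"
  shows "Cat_nonempty n M"
proof (rule Cat_nonempty_of_category_on)
  define T where "T j \<longleftrightarrow> M j j = 1" for j
  define c where "c j k = M j k - a k * b j - (if j = k \<and> \<not> T j then 1 else 0)" for j k
  have "c j k = 0" if "j < n" "k < n" "T j \<or> T k" for j k
    using through[OF that(1,2)] that(3) unfolding c_def T_def by simp
  then show "category_on n (factor_hom T a b c) (factor_id T) (\<lambda>_ _ _. factor_comp)"
    using pos trivial by (intro factor_category_on) (simp_all add: T_def)
  show "finite (factor_hom T a b c j k) \<and> card (factor_hom T a b c j k) = M j k"
    if "j < n" "k < n" for j k
    using room[OF that] unfolding c_def T_def by (simp add: finite_factor_hom card_factor_hom)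
qed

lemma Cat_nonempty_if_no_trivial_object:
  assumes pos: "\<And>i j. i < n \<Longrightarrow> j < n \<Longrightarrow> M i j \<ge> 1"
    and nontrivial: "\<And>j. j < n \<Longrightarrow> M j j \<noteq> 1"
  shows "Cat_nonempty n M"
proof (rule Cat_nonempty_by_factorization[where a = "\<lambda>_. 1" and b = "\<lambda>_. 1"])
  show "1 * 1 + (if j = k \<and> M j j \<noteq> 1 then 1 else 0) \<le> M j k" if "j < n" "k < n" for j k
    using pos[OF that] nontrivial[OF that(1)] by auto
qed (use nontrivial in auto)

text \<open>Applying the inequality with another object j with m_jj = 1 in place of t gives
  m_jk \<le> m_tk and m_kj \<le> m_kt; this yields the equalities for morphisms into and out of j.\<close>

lemma Cat_nonempty_if_through_trivial_bounds:
  assumes pos: "\<And>i j. i < n \<Longrightarrow> j < n \<Longrightarrow> M i j \<ge> 1"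
    and t: "t < n" "M t t = 1"
    and le: "\<And>t j k. t < n \<Longrightarrow> j < n \<Longrightarrow> k < n \<Longrightarrow> M t t = 1 \<Longrightarrow> M t k * M j t \<le> M j k"
    and less: "\<And>t j. t < n \<Longrightarrow> j < n \<Longrightarrow> M t t = 1 \<Longrightarrow> M j j \<noteq> 1 \<Longrightarrow> M t j * M j t < M j j"
  shows "Cat_nonempty n M"
proof (rule Cat_nonempty_by_factorization[where a = "\<lambda>k. M t k" and b = "\<lambda>j. M j t"])
  show trivial: "M t j = 1 \<and> M j t = 1" if "j < n" "M j j = 1" for j
    using le[OF t(1) that(1) that(1) t(2)] pos[OF t(1) that(1)] pos[OF that(1) t(1)] that(2)
    by (metis One_nat_def le_antisym mult_eq_1_iff one_le_mult_iff)
  show "M j k = M t k * M j t" if "j < n" "k < n" "M j j = 1 \<or> M k k = 1" for j k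
    using that(3)
  proof
    assume "M j j = 1"
    then have "M j k * M t j \<le> M t k" and "M t j = 1" and "M j t = 1"
      using le[OF that(1) t(1) that(2)] trivial[OF that(1)] by simp_all
    then show ?thesis using le[OF t(1) that(1,2) t(2)] by simp
  next
    assume "M k k = 1"
    then have "M k t * M j k \<le> M j t" and "M t k = 1" and "M k t = 1"
      using le[OF that(2) that(1) t(1)] trivial[OF that(2)] by simp_all
    then show ?thesis using le[OF t(1) that(1,2) t(2)] by simp
  qed
  show "M t k * M j t + (if j = k \<and> M j j \<noteq> 1 then 1 else 0) \<le> M j k"
    if "j < n" "k < n" for j k
    using le[OF t(1) that t(2)] less[OF t(1) that(1) t(2)] by auto
  show "M t k \<ge> 1 \<and> M k t \<ge> 1" if "k < n" for k
    using pos t(1) that by simp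
qed

lemma nth_triple_less: "s < 3 \<Longrightarrow> x < n \<Longrightarrow> y < n \<Longrightarrow> z < n \<Longrightarrow> [x, y, z] ! s < n"
  by (auto simp: less_Suc_eq numeral_3_eq_3)

lemma increasing_triple_cover:
  fixes n x y z :: nat
  assumes "3 \<le> n" "x < n" "y < n" "z < n"
  obtains a b c where "a < b" "b < c" "c < n" "{x, y, z} \<subseteq> {a, b, c}"
proof -
  obtain B where B: "{x, y, z} \<subseteq> B" "B \<subseteq> {..<n}" "card B = 3"
    using exists_subset_between[of "{x, y, z}" 3 "{..<n}"] assms by (auto simp: card_insert_le_m1)
  then have fin: "finite B" by (meson finite_lessThan finite_subset)
  define l where "l = sorted_list_of_set B"
  have "length l = 3" using B(3) by (simp add: l_def)
  then obtain a b c where abc: "l = [a, b, c]" by (auto simp: numeral_3_eq_3 length_Suc_conv)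
  have "sorted_wrt (<) l" using strict_sorted_list_of_set[of B] by (simp add: l_def)
  moreover have "set l = B" using set_sorted_list_of_set[OF fin] by (simp add: l_def)
  ultimately show thesis using that B abc by auto
qed

lemma Cat_nonempty_on_any_triple:
  fixes n x y z :: nat
  assumes n: "3 \<le> n"
    and triples: "\<forall>a b c. a < b \<and> b < c \<and> c < n \<longrightarrow>
       Cat_nonempty 3 (\<lambda>s u. M ([a, b, c] ! s) ([a, b, c] ! u))"
    and xyz: "x < n" "y < n" "z < n"
  shows "Cat_nonempty 3 (\<lambda>s u. M ([x, y, z] ! s) ([x, y, z] ! u))"
proof -
  obtain a b c where abc: "a < b" "b < c" "c < n" "{x, y, z} \<subseteq> {a, b, c}"
    using increasing_triple_cover[OF n xyz] .
  have "\<exists>i<3. [a, b, c] ! i = [x, y, z] ! s" if "s < 3" for s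
  proof -
    have "[x, y, z] ! s \<in> set [a, b, c]" using nth_mem[of s "[x, y, z]"] that abc(4) by auto
    then show ?thesis using in_set_conv_nth[of _ "[a, b, c]"] by (simp add: numeral_3_eq_3)
  qed
  then obtain \<sigma> where \<sigma>: "\<And>s. s < 3 \<Longrightarrow> \<sigma> s < 3 \<and> [a, b, c] ! \<sigma> s = [x, y, z] ! s"
    by metis
  show ?thesis
    by (rule Cat_nonempty_reindex[of 3 "\<lambda>s u. M ([a, b, c] ! s) ([a, b, c] ! u)" _ \<sigma>])
      (use triples abc \<sigma> in auto)
qed

lemma through_trivial_bounds_of_triples:
  fixes n :: nat
  assumes n: "3 \<le> n" and pos: "\<And>i j. i < n \<Longrightarrow> j < n \<Longrightarrow> M i j \<ge> 1"
    and triples: "\<forall>a b c. a < b \<and> b < c \<and> c < n \<longrightarrow>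
       Cat_nonempty 3 (\<lambda>s u. M ([a, b, c] ! s) ([a, b, c] ! u))"
    and t: "t < n" "M t t = 1" and j: "j < n" and k: "k < n"
  shows "M t k * M j t \<le> M j k" and "M j j \<noteq> 1 \<Longrightarrow> M t j * M j t < M j j"
proof -
  have "\<And>s u. s < 3 \<Longrightarrow> u < 3 \<Longrightarrow> M ([t, j, k] ! s) ([t, j, k] ! u) \<ge> 1"
    using t(1) j k by (intro pos nth_triple_less)
  note bounds = Cat_nonempty_through_trivial[OF Cat_nonempty_on_any_triple[OF n triples t(1) j k]
      this, of 0 1 2]
  show "M t k * M j t \<le> M j k" using bounds(1) t(2) by simp
  show "M t j * M j t < M j j" if "M j j \<noteq> 1" using bounds(2) t(2) that by simp
qed

theorem mainTheorem9:
  fixes n :: nat and M :: "nat \<Rightarrow> nat \<Rightarrow> nat"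
  assumes "n \<ge> 3"
    and "\<forall>i<n. \<forall>j<n. M i j \<ge> 1"
  shows "Cat_nonempty n M \<longleftrightarrow>
    (\<forall>a b c. a < b \<and> b < c \<and> c < n \<longrightarrow>
       Cat_nonempty 3 (\<lambda>s t. M ([a, b, c] ! s) ([a, b, c] ! t)))"
proof (intro iffI allI impI)
  fix a b c assume M: "Cat_nonempty n M" and "a < b \<and> b < c \<and> c < n"
  then have "\<And>s. s < 3 \<Longrightarrow> [a, b, c] ! s < n" by (simp add: nth_triple_less)
  from Cat_nonempty_reindex[OF M this]
  show "Cat_nonempty 3 (\<lambda>s t. M ([a, b, c] ! s) ([a, b, c] ! t))" by simp
next
  assume triples: "\<forall>a b c. a < b \<and> b < c \<and> c < n \<longrightarrow>
      Cat_nonempty 3 (\<lambda>s t. M ([a, b, c] ! s) ([a, b, c] ! t))"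
  have pos: "\<And>i j. i < n \<Longrightarrow> j < n \<Longrightarrow> M i j \<ge> 1" using assms(2) by simp
  note bounds = through_trivial_bounds_of_triples[OF assms(1) pos triples]
  show "Cat_nonempty n M"
  proof (cases "\<exists>t<n. M t t = 1")
    case True
    then obtain t where t: "t < n" "M t t = 1" by blast
    show ?thesis
      by (rule Cat_nonempty_if_through_trivial_bounds) (fact pos t | (rule bounds; assumption))+
  next
    case False
    then have nontrivial: "\<And>j. j < n \<Longrightarrow> M j j \<noteq> 1" by blast
    show ?thesis by (rule Cat_nonempty_if_no_trivial_object) (fact pos nontrivial)+
  qed
qed

end
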